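(* For any congruences $R$ and $S$ on the same quandle $X$, $c_X(R\vee S)=c_X(R)\vee c_X(S)$, where $\vee$ denotes the join in the lattice of congruences on $X$.
   Context: A quandle is a set $X$ with two binary operations $\lhd,\lhd^{-1}$ satisfying, for all $x,y,z\in X$: $x\lhd x = x = x\lhd^{-1}x$; $(x\lhd y)\lhd^{-1}y = x = (x\lhd^{-1}y)\lhd y$; $(x\lhd y)\lhd z = (x\lhd z)\lhd(y\lhd z)$ and $(x\lhd^{-1}y)\lhd^{-1}z = (x\lhd^{-1}z)\lhd^{-1}(y\lhd^{-1}z)$. Homomorphisms preserve both operations. A congruence on $X$ is an equivalence relation on $X$ that is a subquandle of $X\times X$. For $x\in X$, the orbit $[x]_X$ is the set of all elements $x\lhd^{\alpha_1}x_1\cdots\lhd^{\alpha_n}x_n$ ($n\ge 0$, $x_i\in X$, $\lhd^{\alpha_i}\in\{\lhd,\lhd^{-1}\}$, bracketed from the left). The effective closure of a congruence $R$ on $X$ (associated with the reflection of quandles onto trivial quandles) is $c_X(R)=\{(x,y)\in X\times X\mid [q(x)]_{X/R}=[q(y)]_{X/R}\}$ where $q\colon X\to X/R$ is the canonical quotient. *)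

theory Defs
  imports Main
begin

definition quandle :: "'a set \<Rightarrow> ('a \<Rightarrow> 'a \<Rightarrow> 'a) \<Rightarrow> ('a \<Rightarrow> 'a \<Rightarrow> 'a) \<Rightarrow> bool" where
  "quandle X f g \<longleftrightarrow>
     (\<forall>x\<in>X. \<forall>y\<in>X. f x y \<in> X \<and> g x y \<in> X) \<and>
     (\<forall>x\<in>X. f x x = x \<and> g x x = x) \<and>
     (\<forall>x\<in>X. \<forall>y\<in>X. g (f x y) y = x \<and> f (g x y) y = x) \<and>
     (\<forall>x\<in>X. \<forall>y\<in>X. \<forall>z\<in>X. f (f x y) z = f (f x z) (f y z) \<and>
                             g (g x y) z = g (g x z) (g y z))"

definition congruence :: "'a set \<Rightarrow> ('a \<Rightarrow> 'a \<Rightarrow> 'a) \<Rightarrow> ('a \<Rightarrow> 'a \<Rightarrow> 'a) \<Rightarrow> 'a rel \<Rightarrow> bool" where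
  "congruence X f g R \<longleftrightarrow> equiv X R \<and>
     (\<forall>x x' y y'. (x, x') \<in> R \<longrightarrow> (y, y') \<in> R \<longrightarrow>
        (f x y, f x' y') \<in> R \<and> (g x y, g x' y') \<in> R)"

definition quot_op :: "'a rel \<Rightarrow> ('a \<Rightarrow> 'a \<Rightarrow> 'a) \<Rightarrow> 'a set \<Rightarrow> 'a set \<Rightarrow> 'a set" where
  "quot_op R f A B = R `` {f (SOME a. a \<in> A) (SOME b. b \<in> B)}"

inductive_set orbit :: "'a set \<Rightarrow> ('a \<Rightarrow> 'a \<Rightarrow> 'a) \<Rightarrow> ('a \<Rightarrow> 'a \<Rightarrow> 'a) \<Rightarrow> 'a \<Rightarrow> 'a set"
  for X f g x where
  orbit_base: "x \<in> orbit X f g x"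
| orbit_f: "y \<in> orbit X f g x \<Longrightarrow> z \<in> X \<Longrightarrow> f y z \<in> orbit X f g x"
| orbit_g: "y \<in> orbit X f g x \<Longrightarrow> z \<in> X \<Longrightarrow> g y z \<in> orbit X f g x"

definition effective_closure :: "'a set \<Rightarrow> ('a \<Rightarrow> 'a \<Rightarrow> 'a) \<Rightarrow> ('a \<Rightarrow> 'a \<Rightarrow> 'a) \<Rightarrow> 'a rel \<Rightarrow> 'a rel" where
  "effective_closure X f g R = {(x, y). x \<in> X \<and> y \<in> X \<and>
     orbit (X // R) (quot_op R f) (quot_op R g) (R `` {x}) =
     orbit (X // R) (quot_op R f) (quot_op R g) (R `` {y})}"

definition cong_join :: "'a set \<Rightarrow> ('a \<Rightarrow> 'a \<Rightarrow> 'a) \<Rightarrow> ('a \<Rightarrow> 'a \<Rightarrow> 'a) \<Rightarrow> 'a rel \<Rightarrow> 'a rel \<Rightarrow> 'a rel" where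
  "cong_join X f g R S = \<Inter> {T. congruence X f g T \<and> R \<union> S \<subseteq> T}"

end

theory Submission
  imports Defs
begin

text \<open>
  Lifting orbits along the quotient map shows that \<open>c\<^sub>X(R)\<close> relates \<open>x\<close> and \<open>y\<close> exactly when
  \<open>y\<close> is \<open>R\<close>-related to a point of the orbit of \<open>x\<close>. Hence \<open>c\<^sub>X(R)\<close> is the least congruence
  containing both \<open>R\<close> and all pairs \<open>(x, x \<lhd> z)\<close>, i.e. \<open>c\<^sub>X(R) = R \<or> O\<close> for the orbit
  congruence \<open>O\<close>, and the theorem becomes \<open>(R \<or> S) \<or> O = (R \<or> O) \<or> (S \<or> O)\<close>.
\<close>

lemma congruence_equiv: "congruence X f g R \<Longrightarrow> equiv X R"
  unfolding congruence_def by blast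

lemma congruence_compat:
  "congruence X f g R \<Longrightarrow> (x, x') \<in> R \<Longrightarrow> (y, y') \<in> R \<Longrightarrow>
     (f x y, f x' y') \<in> R \<and> (g x y, g x' y') \<in> R"
  unfolding congruence_def by blast

lemma congruence_refl: "congruence X f g R \<Longrightarrow> x \<in> X \<Longrightarrow> (x, x) \<in> R"
  unfolding congruence_def equiv_def refl_on_def by blast

lemma congruence_sym: "congruence X f g R \<Longrightarrow> (x, y) \<in> R \<Longrightarrow> (y, x) \<in> R"
  unfolding congruence_def equiv_def sym_def by blast

lemma congruence_trans: "congruence X f g R \<Longrightarrow> (x, y) \<in> R \<Longrightarrow> (y, z) \<in> R \<Longrightarrow> (x, z) \<in> R"
  unfolding congruence_def equiv_def trans_def by blast

lemma congruence_subset: "congruence X f g R \<Longrightarrow> R \<subseteq> X \<times> X"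
  unfolding congruence_def equiv_def refl_on_def by blast

lemma congruence_Inter:
  assumes "T\<^sub>0 \<in> F" and "\<And>T. T \<in> F \<Longrightarrow> congruence X f g T"
  shows "congruence X f g (\<Inter>F)"
proof -
  have "\<Inter>F \<subseteq> X \<times> X" using assms congruence_subset by blast
  moreover have "refl_on X (\<Inter>F)"
    using calculation by (auto simp: refl_on_def intro: congruence_refl[OF assms(2)])
  moreover have "sym (\<Inter>F)" by (auto intro!: symI intro: congruence_sym[OF assms(2)])
  moreover have "trans (\<Inter>F)" by (blast intro!: transI intro: congruence_trans[OF assms(2)])
  moreover have "(f x y, f x' y') \<in> \<Inter>F \<and> (g x y, g x' y') \<in> \<Inter>F"
    if "(x, x') \<in> \<Inter>F" "(y, y') \<in> \<Inter>F" for x x' y y'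
    using that congruence_compat[OF assms(2)] by blast
  ultimately show ?thesis unfolding congruence_def equiv_def by blast
qed

lemma cong_join_upper: "A \<union> B \<subseteq> cong_join X f g A B"
  unfolding cong_join_def by blast

lemma cong_join_least: "congruence X f g T \<Longrightarrow> A \<union> B \<subseteq> T \<Longrightarrow> cong_join X f g A B \<subseteq> T"
  unfolding cong_join_def by blast

context
  fixes X f g
  assumes quandle: "quandle X f g"
begin

lemma quandle_closed: "x \<in> X \<Longrightarrow> y \<in> X \<Longrightarrow> f x y \<in> X \<and> g x y \<in> X"
  using quandle unfolding quandle_def by blast

lemma quandle_cancel: "x \<in> X \<Longrightarrow> y \<in> X \<Longrightarrow> g (f x y) y = x \<and> f (g x y) y = x"
  using quandle unfolding quandle_def by blast

lemma congruence_UNIV: "congruence X f g (X \<times> X)"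
  unfolding congruence_def equiv_def refl_on_def sym_def trans_def using quandle_closed by auto

lemma congruence_cong_join:
  "congruence X f g A \<Longrightarrow> congruence X f g B \<Longrightarrow> congruence X f g (cong_join X f g A B)"
  unfolding cong_join_def
  by (rule congruence_Inter[where T\<^sub>0 = "X \<times> X"]) (auto simp: congruence_UNIV dest: congruence_subset)

lemma cong_join_le_iff:
  assumes "congruence X f g A" "congruence X f g B" "congruence X f g T"
  shows "cong_join X f g A B \<subseteq> T \<longleftrightarrow> A \<subseteq> T \<and> B \<subseteq> T"
  using cong_join_upper[of A B] cong_join_least[OF assms(3)] by blast

lemma orbit_subset: "x \<in> X \<Longrightarrow> orbit X f g x \<subseteq> X"
proof
  fix y assume "x \<in> X" "y \<in> orbit X f g x"
  from this(2,1) show "y \<in> X" by (induction rule: orbit.induct) (auto simp: quandle_closed)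
qed

lemma orbit_trans: "w \<in> orbit X f g y \<Longrightarrow> y \<in> orbit X f g x \<Longrightarrow> w \<in> orbit X f g x"
  by (induction rule: orbit.induct) (auto intro: orbit.intros)

lemma orbit_sym: "y \<in> orbit X f g x \<Longrightarrow> x \<in> X \<Longrightarrow> x \<in> orbit X f g y"
proof (induction rule: orbit.induct)
  case orbit_base
  show ?case by (rule orbit.orbit_base)
next
  case (orbit_f y z)
  have "y \<in> X" using orbit_subset orbit_f by blast
  then have "y \<in> orbit X f g (f y z)"
    using orbit.orbit_g[OF orbit.orbit_base \<open>z \<in> X\<close>] quandle_cancel \<open>z \<in> X\<close> by metis
  then show ?case using orbit_f orbit_trans by blast
next
  case (orbit_g y z)
  have "y \<in> X" using orbit_subset orbit_g by blast
  then have "y \<in> orbit X f g (g y z)"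
    using orbit.orbit_f[OF orbit.orbit_base \<open>z \<in> X\<close>] quandle_cancel \<open>z \<in> X\<close> by metis
  then show ?case using orbit_g orbit_trans by blast
qed

lemma orbit_f_mem: "x \<in> X \<Longrightarrow> y \<in> X \<Longrightarrow> x \<in> orbit X f g (f x y)"
  by (rule orbit_sym) (auto intro: orbit.intros)

lemma orbit_g_mem: "x \<in> X \<Longrightarrow> y \<in> X \<Longrightarrow> x \<in> orbit X f g (g x y)"
  by (rule orbit_sym) (auto intro: orbit.intros)

context
  fixes R
  assumes R: "congruence X f g R"
begin

lemma orbit_lift:
  "v \<in> orbit X f g b \<Longrightarrow> (a, b) \<in> R \<Longrightarrow> \<exists>v'\<in>orbit X f g a. (v', v) \<in> R"
proof (induction rule: orbit.induct)
  case orbit_base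
  then show ?case by (auto intro: orbit.intros)
next
  case (orbit_f y z)
  then obtain v' where "v' \<in> orbit X f g a" "(v', y) \<in> R" by blast
  then show ?case
    using congruence_compat[OF R _ congruence_refl[OF R orbit_f(2)]] orbit_f
    by (auto intro: orbit.intros)
next
  case (orbit_g y z)
  then obtain v' where "v' \<in> orbit X f g a" "(v', y) \<in> R" by blast
  then show ?case
    using congruence_compat[OF R _ congruence_refl[OF R orbit_g(2)]] orbit_g
    by (auto intro: orbit.intros)
qed

lemma quot_op_classes:
  assumes "a \<in> X" "b \<in> X"
  shows "quot_op R f (R``{a}) (R``{b}) = R``{f a b} \<and> quot_op R g (R``{a}) (R``{b}) = R``{g a b}"
proof -
  have "(c, SOME c'. c' \<in> R``{c}) \<in> R" if "c \<in> X" for c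
    using someI[of "\<lambda>c'. c' \<in> R``{c}" c] congruence_refl[OF R that] by simp
  from congruence_compat[OF R this[OF assms(1)] this[OF assms(2)]] show ?thesis
    unfolding quot_op_def using equiv_class_eq[OF congruence_equiv[OF R]] by metis
qed

lemma orbit_quotient:
  assumes x: "x \<in> X"
  shows "orbit (X // R) (quot_op R f) (quot_op R g) (R``{x}) = (\<lambda>w. R``{w}) ` orbit X f g x"
proof
  show "orbit (X // R) (quot_op R f) (quot_op R g) (R``{x}) \<subseteq> (\<lambda>w. R``{w}) ` orbit X f g x"
  proof
    fix A assume "A \<in> orbit (X // R) (quot_op R f) (quot_op R g) (R``{x})"
    then show "A \<in> (\<lambda>w. R``{w}) ` orbit X f g x"
    proof (induction rule: orbit.induct)
      case orbit_base
      then show ?case by (auto intro: orbit.intros)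
    next
      case (orbit_f B C)
      then obtain w v where "w \<in> orbit X f g x" "B = R``{w}" "v \<in> X" "C = R``{v}"
        by (auto simp: quotient_def)
      then show ?case
        using quot_op_classes[of w v] orbit_subset[OF x] by (auto intro: orbit.intros)
    next
      case (orbit_g B C)
      then obtain w v where "w \<in> orbit X f g x" "B = R``{w}" "v \<in> X" "C = R``{v}"
        by (auto simp: quotient_def)
      then show ?case
        using quot_op_classes[of w v] orbit_subset[OF x] by (auto intro: orbit.intros)
    qed
  qed
  show "(\<lambda>w. R``{w}) ` orbit X f g x \<subseteq> orbit (X // R) (quot_op R f) (quot_op R g) (R``{x})"
  proof clarify
    fix w assume "w \<in> orbit X f g x"
    then show "R``{w} \<in> orbit (X // R) (quot_op R f) (quot_op R g) (R``{x})"
    proof (induction rule: orbit.induct)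
      case orbit_base
      then show ?case by (rule orbit.intros)
    next
      case (orbit_f y z)
      have "y \<in> X" "R``{z} \<in> X // R" using orbit_subset[OF x] orbit_f by (auto simp: quotient_def)
      then show ?case using orbit_f quot_op_classes[of y z] orbit.orbit_f by metis
    next
      case (orbit_g y z)
      have "y \<in> X" "R``{z} \<in> X // R" using orbit_subset[OF x] orbit_g by (auto simp: quotient_def)
      then show ?case using orbit_g quot_op_classes[of y z] orbit.orbit_g by metis
    qed
  qed
qed

lemma orbit_classes_eq_iff:
  assumes x: "x \<in> X" and y: "y \<in> X"
  shows "(\<lambda>w. R``{w}) ` orbit X f g x = (\<lambda>w. R``{w}) ` orbit X f g y \<longleftrightarrow>
         (\<exists>w\<in>orbit X f g x. (w, y) \<in> R)"
proof
  assume "(\<lambda>w. R``{w}) ` orbit X f g x = (\<lambda>w. R``{w}) ` orbit X f g y"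
  then have "R``{y} \<in> (\<lambda>w. R``{w}) ` orbit X f g x" by (auto intro: orbit.intros)
  then obtain w where "w \<in> orbit X f g x" "R``{w} = R``{y}" by blast
  then show "\<exists>w\<in>orbit X f g x. (w, y) \<in> R"
    using eq_equiv_class_iff[OF congruence_equiv[OF R]] orbit_subset[OF x] y by blast
next
  assume "\<exists>w\<in>orbit X f g x. (w, y) \<in> R"
  then obtain w where w: "w \<in> orbit X f g x" "(w, y) \<in> R" by blast
  have classes: "R``{u} \<in> (\<lambda>w. R``{w}) ` orbit X f g b"
    if "u \<in> orbit X f g a" "(b, a) \<in> R" for a b u
    using orbit_lift[OF that] equiv_class_eq[OF congruence_equiv[OF R]] by blast
  show "(\<lambda>w. R``{w}) ` orbit X f g x = (\<lambda>w. R``{w}) ` orbit X f g y"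
  proof (intro equalityI subsetI)
    fix A assume "A \<in> (\<lambda>w. R``{w}) ` orbit X f g x"
    then obtain u where "u \<in> orbit X f g x" "A = R``{u}" by blast
    with orbit_trans orbit_sym[OF w(1) x] classes congruence_sym[OF R w(2)]
    show "A \<in> (\<lambda>w. R``{w}) ` orbit X f g y" by blast
  next
    fix A assume "A \<in> (\<lambda>w. R``{w}) ` orbit X f g y"
    then obtain u where "u \<in> orbit X f g y" "A = R``{u}" by blast
    with classes[OF _ w(2)] orbit_trans[OF _ w(1)]
    show "A \<in> (\<lambda>w. R``{w}) ` orbit X f g x" by blast
  qed
qed

lemma effective_closure_char:
  "effective_closure X f g R = {(x, y). x \<in> X \<and> y \<in> X \<and> (\<exists>w\<in>orbit X f g x. (w, y) \<in> R)}"
proof -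
  have "orbit (X // R) (quot_op R f) (quot_op R g) (R``{x}) =
          orbit (X // R) (quot_op R f) (quot_op R g) (R``{y}) \<longleftrightarrow>
        (\<exists>w\<in>orbit X f g x. (w, y) \<in> R)" if "x \<in> X" "y \<in> X" for x y
    using that by (simp add: orbit_quotient orbit_classes_eq_iff)
  then show ?thesis unfolding effective_closure_def by auto
qed

lemma effective_closure_superset: "R \<subseteq> effective_closure X f g R"
  unfolding effective_closure_char using congruence_subset[OF R] by (auto intro: orbit.intros)

lemma effective_closure_orbit_pair:
  "x \<in> X \<Longrightarrow> z \<in> X \<Longrightarrow> (x, f x z) \<in> effective_closure X f g R"
  unfolding effective_closure_char
  using quandle_closed congruence_refl[OF R] by (blast intro: orbit.intros)

lemma effective_closure_congruence: "congruence X f g (effective_closure X f g R)"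
proof -
  let ?E = "effective_closure X f g R"
  have "?E \<subseteq> X \<times> X" unfolding effective_closure_char by blast
  moreover have "refl_on X ?E"
    unfolding refl_on_def effective_closure_char
    using congruence_refl[OF R] by (auto intro: orbit.intros)
  moreover have "sym ?E"
  proof (rule symI)
    fix x y assume "(x, y) \<in> ?E"
    then obtain w where "x \<in> X" "y \<in> X" "w \<in> orbit X f g x" "(y, w) \<in> R"
      unfolding effective_closure_char using congruence_sym[OF R] by blast
    with orbit_lift[OF orbit_sym] show "(y, x) \<in> ?E"
      unfolding effective_closure_char by blast
  qed
  moreover have "trans ?E"
  proof (rule transI)
    fix x y z assume "(x, y) \<in> ?E" "(y, z) \<in> ?E"
    then obtain w u where "x \<in> X" "z \<in> X" "w \<in> orbit X f g x" "(w, y) \<in> R"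
      "u \<in> orbit X f g y" "(u, z) \<in> R"
      unfolding effective_closure_char by blast
    with orbit_lift orbit_trans congruence_trans[OF R] show "(x, z) \<in> ?E"
      unfolding effective_closure_char by blast
  qed
  moreover have "(f x y, f x' y') \<in> ?E \<and> (g x y, g x' y') \<in> ?E"
    if "(x, x') \<in> ?E" "(y, y') \<in> ?E" for x x' y y'
  proof -
    from that obtain w where xy: "x \<in> X" "x' \<in> X" "y \<in> X" "y' \<in> X"
      and w: "w \<in> orbit X f g x" "(w, x') \<in> R"
      unfolding effective_closure_char by blast
    text \<open>The orbit of \<open>x\<close> contains \<open>w\<close>, so those of \<open>x \<lhd> y\<close> and \<open>x \<lhd>\<^sup>-\<^sup>1 y\<close> contain \<open>w \<lhd> y'\<close> and \<open>w \<lhd>\<^sup>-\<^sup>1 y'\<close>.\<close>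
    have "w \<in> orbit X f g (f x y)" "w \<in> orbit X f g (g x y)"
      using orbit_trans[OF w(1)] orbit_f_mem orbit_g_mem xy by blast+
    with xy w quandle_closed congruence_compat[OF R w(2) congruence_refl[OF R, of y']]
    show ?thesis
      unfolding effective_closure_char by (blast intro: orbit.intros)
  qed
  ultimately show ?thesis unfolding congruence_def equiv_def by blast
qed

lemma effective_closure_least:
  assumes T: "congruence X f g T" and "R \<subseteq> T"
    and orbit_pairs: "\<And>x z. x \<in> X \<Longrightarrow> z \<in> X \<Longrightarrow> (x, f x z) \<in> T"
  shows "effective_closure X f g R \<subseteq> T"
proof -
  have "(x, w) \<in> T" if "w \<in> orbit X f g x" "x \<in> X" for x w
    using that
  proof (induction rule: orbit.induct)
    case orbit_base
    then show ?case using congruence_refl[OF T] by blast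
  next
    case (orbit_f y z)
    then show ?case
      using orbit_subset orbit_pairs congruence_trans[OF T] by blast
  next
    case (orbit_g y z)
    have "y \<in> X" using orbit_subset orbit_g by blast
    then have "(g y z, y) \<in> T"
      using orbit_pairs[of "g y z" z] quandle_closed quandle_cancel orbit_g(2) by metis
    then show ?case using orbit_g congruence_trans[OF T] congruence_sym[OF T] by blast
  qed
  with \<open>R \<subseteq> T\<close> congruence_trans[OF T] show ?thesis
    unfolding effective_closure_char by blast
qed

end

lemma effective_closure_le_iff:
  assumes "congruence X f g R" "congruence X f g T"
  shows "effective_closure X f g R \<subseteq> T \<longleftrightarrow> R \<subseteq> T \<and> (\<forall>x\<in>X. \<forall>z\<in>X. (x, f x z) \<in> T)"
  using effective_closure_least[OF assms(1,2)] effective_closure_superset[OF assms(1)]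
    effective_closure_orbit_pair[OF assms(1)] by blast

lemma effective_closure_mono:
  assumes "congruence X f g R" "congruence X f g S" "R \<subseteq> S"
  shows "effective_closure X f g R \<subseteq> effective_closure X f g S"
  using assms(3) unfolding effective_closure_char[OF assms(1)] effective_closure_char[OF assms(2)]
  by blast

end

theorem mainTheorem12:
  assumes "quandle X f g"
    and "congruence X f g R"
    and "congruence X f g S"
  shows "effective_closure X f g (cong_join X f g R S) =
         cong_join X f g (effective_closure X f g R) (effective_closure X f g S)"
proof -
  let ?c = "effective_closure X f g"
  let ?J = "cong_join X f g R S"
  let ?K = "cong_join X f g (?c R) (?c S)"
  note c_cong = effective_closure_congruence[OF assms(1)]
  have J: "congruence X f g ?J" using congruence_cong_join[OF assms] .
  have K: "congruence X f g ?K"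
    using congruence_cong_join[OF assms(1) c_cong[OF assms(2)] c_cong[OF assms(3)]] .
  have "R \<subseteq> ?J" "S \<subseteq> ?J" using cong_join_upper by blast+
  then have "?K \<subseteq> ?c ?J"
    using effective_closure_mono[OF assms(1,2) J] effective_closure_mono[OF assms(1,3) J]
    by (simp add: cong_join_le_iff[OF assms(1) c_cong[OF assms(2)] c_cong[OF assms(3)] c_cong[OF J]])
  moreover have "?c ?J \<subseteq> ?K"
  proof -
    have "?c R \<subseteq> ?K" "?c S \<subseteq> ?K" using cong_join_upper by blast+
    then have "R \<subseteq> ?K" "S \<subseteq> ?K" "\<forall>x\<in>X. \<forall>z\<in>X. (x, f x z) \<in> ?K"
      using effective_closure_le_iff[OF assms(1,2) K] effective_closure_le_iff[OF assms(1,3) K]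
      by blast+
    then show ?thesis
      by (simp add: effective_closure_le_iff[OF assms(1) J K] cong_join_le_iff[OF assms K])
  qed
  ultimately show ?thesis by blast
qed

end
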